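(* Let $\mathcal{C}$ be a Cayley algebra over a field $\mathbb{F}$ with norm $\mathrm{n}$. Then every $2$-local automorphism of $\mathcal{C}$ is a linear map.
   Context: A Cayley (octonion) algebra over $\mathbb{F}$ is a unital nonassociative algebra $\mathcal{C}$ of dimension $8$ over $\mathbb{F}$ endowed with a quadratic form $\mathrm{n}:\mathcal{C}\to\mathbb{F}$ (the norm) such that $\mathrm{n}(xy)=\mathrm{n}(x)\mathrm{n}(y)$ for all $x,y$ and whose polar form $\mathrm{n}(x,y)=\mathrm{n}(x+y)-\mathrm{n}(x)-\mathrm{n}(y)$ is nondegenerate. A map $\Delta:\mathcal{C}\to\mathcal{C}$ (not assumed linear) is a $2$-local automorphism if for every pair $x,y\in\mathcal{C}$ there is an algebra automorphism $\varphi_{x,y}$ of $\mathcal{C}$ (depending on $x,y$) with $\Delta(x)=\varphi_{x,y}(x)$ and $\Delta(y)=\varphi_{x,y}(y)$. *)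

theory Defs
  imports Complex_Main
begin

definition polar :: "('v::ab_group_add \<Rightarrow> 'f::field) \<Rightarrow> 'v \<Rightarrow> 'v \<Rightarrow> 'f" where
  "polar nrm x y = nrm (x + y) - nrm x - nrm y"

definition cayley_algebra ::
  "('f::field \<Rightarrow> 'v::ab_group_add \<Rightarrow> 'v) \<Rightarrow> ('v \<Rightarrow> 'v \<Rightarrow> 'v) \<Rightarrow> 'v \<Rightarrow> ('v \<Rightarrow> 'f) \<Rightarrow> bool" where
  "cayley_algebra scl mul one nrm \<longleftrightarrow>
     vector_space scl \<and>
     vector_space.dim scl (UNIV :: 'v set) = 8 \<and>
     \<comment> \<open>bilinear multiplication\<close>
     (\<forall>x y z. mul (x + y) z = mul x z + mul y z) \<and>
     (\<forall>x y z. mul x (y + z) = mul x y + mul x z) \<and>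
     (\<forall>a x y. mul (scl a x) y = scl a (mul x y)) \<and>
     (\<forall>a x y. mul x (scl a y) = scl a (mul x y)) \<and>
     \<comment> \<open>unital\<close>
     (\<forall>x. mul one x = x \<and> mul x one = x) \<and>
     \<comment> \<open>nrm is a quadratic form\<close>
     (\<forall>a x. nrm (scl a x) = a * a * nrm x) \<and>
     (\<forall>x y z. polar nrm (x + y) z = polar nrm x z + polar nrm y z) \<and>
     (\<forall>a x y. polar nrm (scl a x) y = a * polar nrm x y) \<and>
     \<comment> \<open>multiplicative\<close>
     (\<forall>x y. nrm (mul x y) = nrm x * nrm y) \<and>
     \<comment> \<open>nondegenerate polar form\<close>
     (\<forall>x. (\<forall>y. polar nrm x y = 0) \<longrightarrow> x = 0)"

definition algebra_automorphism ::
  "('f::field \<Rightarrow> 'v::ab_group_add \<Rightarrow> 'v) \<Rightarrow> ('v \<Rightarrow> 'v \<Rightarrow> 'v) \<Rightarrow> ('v \<Rightarrow> 'v) \<Rightarrow> bool" where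
  "algebra_automorphism scl mul \<phi> \<longleftrightarrow>
     Vector_Spaces.linear scl scl \<phi> \<and> bij \<phi> \<and> (\<forall>x y. \<phi> (mul x y) = mul (\<phi> x) (\<phi> y))"

definition two_local_automorphism ::
  "('f::field \<Rightarrow> 'v::ab_group_add \<Rightarrow> 'v) \<Rightarrow> ('v \<Rightarrow> 'v \<Rightarrow> 'v) \<Rightarrow> ('v \<Rightarrow> 'v) \<Rightarrow> bool" where
  "two_local_automorphism scl mul \<Delta> \<longleftrightarrow>
     (\<forall>x y. \<exists>\<phi>. algebra_automorphism scl mul \<phi> \<and> \<Delta> x = \<phi> x \<and> \<Delta> y = \<phi> y)"

end

theory Submission
  imports Defs
begin

(* Every element of a unital composition algebra satisfies x x = t(x) x - n(x) 1 with
   t(x) = n(x, 1).  Applying an automorphism \<phi> to this identity and comparing with the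
   identity for \<phi> x shows that either \<phi> x is a multiple of 1, and then \<phi> x = x, or \<phi>
   preserves t(x) and n(x).  Hence automorphisms, and so 2-local automorphisms \<Delta>, preserve
   the polar form.  A map preserving a nondegenerate bilinear form on a finite-dimensional
   space sends a basis to a basis, so its image spans; then \<Delta>(x + y) - \<Delta> x - \<Delta> y and
   \<Delta>(a x) - a \<Delta> x are orthogonal to everything, hence zero. *)

locale nondegenerate_bilinear_form = vector_space scl
  for scl :: "'f::field \<Rightarrow> 'v::ab_group_add \<Rightarrow> 'v" +
  fixes form :: "'v \<Rightarrow> 'v \<Rightarrow> 'f"
  assumes form_add_left: "form (x + y) z = form x z + form y z"
    and form_scale_left: "form (scl a x) z = a * form x z"
    and form_add_right: "form x (y + z) = form x y + form x z"
    and form_scale_right: "form x (scl a y) = a * form x y"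
    and form_nondegenerate: "(\<And>y. form x y = 0) \<Longrightarrow> x = 0"
begin

lemma form_zero_left: "form 0 z = 0"
  using form_scale_left[of 0 0 z] by simp

lemma form_zero_right: "form x 0 = 0"
  using form_scale_right[of x 0 0] by simp

lemma form_diff_left: "form (x - y) z = form x z - form y z"
  by (metis form_add_left eq_diff_eq)

lemma form_sum_left: "form (\<Sum>i\<in>S. scl (c i) (u i)) z = (\<Sum>i\<in>S. c i * form (u i) z)"
  by (induction S rule: infinite_finite_induct)
    (simp_all add: form_zero_left form_add_left form_scale_left)

lemma form_eq_0_on_span:
  assumes "\<And>s. s \<in> S \<Longrightarrow> form w s = 0" and "v \<in> span S"
  shows "form w v = 0"
proof -
  have "subspace {v. form w v = 0}"
    by (simp add: subspace_def form_zero_right form_add_right form_scale_right)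
  then show ?thesis
    using assms span_induct[of v S "\<lambda>v. form w v = 0"] by simp
qed

context
  fixes \<Delta> :: "'v \<Rightarrow> 'v"
  assumes form_preserving: "\<And>x y. form (\<Delta> x) (\<Delta> y) = form x y"
begin

lemma form_preserving_inj: "inj \<Delta>"
proof (rule injI)
  fix x y
  assume "\<Delta> x = \<Delta> y"
  then have "form (x - y) z = 0" for z
    by (metis form_diff_left form_preserving diff_self)
  then show "x = y"
    using form_nondegenerate[of "x - y"] by simp
qed

lemma form_preserving_independent_image:
  assumes "independent B"
  shows "independent (\<Delta> ` B)"
  unfolding independent_explicit_module
proof (intro allI impI)
  fix T c v
  assume T: "finite T" "T \<subseteq> \<Delta> ` B" "(\<Sum>v\<in>T. scl (c v) v) = 0" "v \<in> T"
  obtain S where S: "S \<subseteq> B" "T = \<Delta> ` S"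
    using T(2) by (auto simp: subset_image_iff)
  have "finite S"
    using T(1) S(2) form_preserving_inj by (simp add: finite_image_iff inj_on_subset)
  have sum_eq_0: "(\<Sum>b\<in>S. scl (c (\<Delta> b)) b) = 0"
  proof (rule form_nondegenerate)
    fix z
    have "form (\<Sum>b\<in>S. scl (c (\<Delta> b)) b) z = form (\<Sum>b\<in>S. scl (c (\<Delta> b)) (\<Delta> b)) (\<Delta> z)"
      by (simp add: form_sum_left form_preserving)
    also have "(\<Sum>b\<in>S. scl (c (\<Delta> b)) (\<Delta> b)) = (\<Sum>v\<in>T. scl (c v) v)"
      using S(2) form_preserving_inj by (simp add: sum.reindex inj_on_subset)
    finally show "form (\<Sum>b\<in>S. scl (c (\<Delta> b)) b) z = 0"
      by (simp add: T(3) form_zero_left)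
  qed
  have "c (\<Delta> b) = 0" if "b \<in> S" for b
    using assms[unfolded independent_explicit_module, rule_format, of S "\<lambda>b. c (\<Delta> b)" b]
      \<open>finite S\<close> S(1) sum_eq_0 that
    by simp
  then show "c v = 0"
    using S(2) T(4) by auto
qed

lemma form_preserving_linear:
  assumes "finite_dimensional_vector_space scl B"
  shows "Vector_Spaces.linear scl scl \<Delta>"
proof -
  interpret finite_dimensional_vector_space scl B by fact
  have "UNIV \<subseteq> span (\<Delta> ` B)"
    using form_preserving_independent_image[OF independent_Basis] form_preserving_inj
    by (intro card_ge_dim_independent) (simp_all add: card_image inj_on_subset)
  then have orthogonal_to_image: "w = 0" if "\<And>z. form w (\<Delta> z) = 0" for w
    using that form_eq_0_on_span[of "\<Delta> ` B" w] form_nondegenerate by blast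
  have "\<Delta> (x + y) - \<Delta> x - \<Delta> y = 0" for x y
    by (rule orthogonal_to_image) (simp add: form_diff_left form_preserving form_add_left)
  moreover have "\<Delta> (scl a x) - scl a (\<Delta> x) = 0" for a x
    by (rule orthogonal_to_image) (simp add: form_diff_left form_preserving form_scale_left)
  ultimately show ?thesis
    by (simp add: Vector_Spaces.linear_iff vector_space_axioms diff_eq_eq add.commute)
qed

end

end

locale composition_algebra = vector_space scl
  for scl :: "'f::field \<Rightarrow> 'v::ab_group_add \<Rightarrow> 'v" +
  fixes mul :: "'v \<Rightarrow> 'v \<Rightarrow> 'v" and one :: 'v and nrm :: "'v \<Rightarrow> 'f"
  assumes mul_add_left: "mul (x + y) z = mul x z + mul y z"
    and mul_add_right: "mul x (y + z) = mul x y + mul x z"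
    and mul_scale_left: "mul (scl a x) y = scl a (mul x y)"
    and mul_scale_right: "mul x (scl a y) = scl a (mul x y)"
    and mul_one_left: "mul one x = x"
    and mul_one_right: "mul x one = x"
    and nrm_scale: "nrm (scl a x) = a * a * nrm x"
    and polar_add_left: "polar nrm (x + y) z = polar nrm x z + polar nrm y z"
    and polar_scale_left: "polar nrm (scl a x) y = a * polar nrm x y"
    and nrm_mul: "nrm (mul x y) = nrm x * nrm y"
    and polar_nondegenerate: "(\<And>y. polar nrm x y = 0) \<Longrightarrow> x = 0"
begin

lemma polar_commute: "polar nrm x y = polar nrm y x"
  by (simp add: polar_def add.commute)

lemma nrm_add: "nrm (x + y) = nrm x + nrm y + polar nrm x y"
  by (simp add: polar_def)

sublocale polar: nondegenerate_bilinear_form scl "polar nrm"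
proof
  fix x y z a
  show "polar nrm x (y + z) = polar nrm x y + polar nrm x z"
    by (metis polar_commute polar_add_left)
  show "polar nrm x (scl a y) = a * polar nrm x y"
    by (metis polar_commute polar_scale_left)
qed (simp_all add: polar_add_left polar_scale_left polar_nondegenerate)

lemma polar_mul_left: "polar nrm (mul x y) (mul x z) = nrm x * polar nrm y z"
  using nrm_mul[of x "y + z"] by (simp add: mul_add_right nrm_add nrm_mul algebra_simps)

lemma polar_mul_linearized:
  "polar nrm (mul x y) (mul w z) + polar nrm (mul w y) (mul x z) = polar nrm x w * polar nrm y z"
  using polar_mul_left[of "x + w" y z]
  by (simp add: mul_add_left polar_add_left polar.form_add_right nrm_add polar_mul_left
      algebra_simps polar_commute[of w x])

lemma mul_self_eq: "mul x x = scl (polar nrm x one) x - scl (nrm x) one"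
proof -
  have "polar nrm (mul x x) z = polar nrm x one * polar nrm x z - nrm x * polar nrm one z" for z
    using polar_mul_linearized[of x x one z] polar_mul_left[of x one z]
    by (simp add: mul_one_left mul_one_right algebra_simps)
  then have "mul x x - (scl (polar nrm x one) x - scl (nrm x) one) = 0"
    by (intro polar_nondegenerate) (simp add: polar.form_diff_left polar_scale_left)
  then show ?thesis
    by simp
qed

lemma trivial_if_one_eq_0: "one = 0 \<Longrightarrow> (x :: 'v) = 0"
  using mul_one_left[of x] mul_scale_left[of 0 0 x] by simp

context
  fixes \<phi> :: "'v \<Rightarrow> 'v"
  assumes automorphism: "algebra_automorphism scl mul \<phi>"
begin

interpretation \<phi>: Vector_Spaces.linear scl scl \<phi>
  using automorphism by (simp add: algebra_automorphism_def)

lemma automorphism_mul: "\<phi> (mul x y) = mul (\<phi> x) (\<phi> y)"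
  using automorphism by (simp add: algebra_automorphism_def)

lemma automorphism_inj: "inj \<phi>"
  using automorphism by (simp add: algebra_automorphism_def bij_is_inj)

lemma automorphism_one: "\<phi> one = one"
proof -
  obtain y where "\<phi> y = one"
    using automorphism by (metis algebra_automorphism_def bij_pointE)
  then show ?thesis
    using automorphism_mul[of one y] by (simp add: mul_one_left mul_one_right)
qed

lemma automorphism_nrm: "nrm (\<phi> x) = nrm x"
proof (cases "\<phi> x = x")
  case False
  let ?t = "polar nrm x one" and ?t' = "polar nrm (\<phi> x) one"
  have "scl ?t (\<phi> x) - scl (nrm x) one = scl ?t' (\<phi> x) - scl (nrm (\<phi> x)) one"
    using arg_cong[OF mul_self_eq[of x], of \<phi>] mul_self_eq[of "\<phi> x"]
    by (simp add: automorphism_mul \<phi>.diff \<phi>.scale automorphism_one)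
  then have eq: "scl (?t - ?t') (\<phi> x) = scl (nrm x - nrm (\<phi> x)) one"
    by (simp add: algebra_simps)
  have "?t = ?t'"
  proof (rule ccontr)
    assume "?t \<noteq> ?t'"
    define c where "c = (nrm x - nrm (\<phi> x)) / (?t - ?t')"
    have \<phi>x: "\<phi> x = scl c one"
      using arg_cong[OF eq, of "scl (inverse (?t - ?t'))"] \<open>?t \<noteq> ?t'\<close>
      by (simp add: c_def divide_inverse mult.commute)
    then have "\<phi> x = \<phi> (scl c one)"
      by (simp add: \<phi>.scale automorphism_one)
    then have "x = scl c one"
      using automorphism_inj by (simp add: inj_eq)
    then show False
      using False \<phi>x by simp
  qed
  then have "scl (nrm x - nrm (\<phi> x)) one = 0"
    using eq by simp
  moreover have "one \<noteq> 0"
    using False trivial_if_one_eq_0[of x] trivial_if_one_eq_0[of "\<phi> x"] by auto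
  ultimately show ?thesis
    by simp
qed simp

lemma automorphism_polar: "polar nrm (\<phi> x) (\<phi> y) = polar nrm x y"
  by (simp add: polar_def automorphism_nrm \<phi>.add[symmetric])

end

lemma two_local_automorphism_polar:
  assumes "two_local_automorphism scl mul \<Delta>"
  shows "polar nrm (\<Delta> x) (\<Delta> y) = polar nrm x y"
proof -
  obtain \<phi> where "algebra_automorphism scl mul \<phi>" "\<Delta> x = \<phi> x" "\<Delta> y = \<phi> y"
    using assms unfolding two_local_automorphism_def by blast
  then show ?thesis
    by (simp add: automorphism_polar)
qed

end

lemma cayley_algebra_composition_algebra:
  "cayley_algebra scl mul one nrm \<Longrightarrow> composition_algebra scl mul one nrm"
  by (simp add: cayley_algebra_def composition_algebra_def composition_algebra_axioms_def)

lemma cayley_algebra_finite_dimensional: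
  fixes scl :: "'f::field \<Rightarrow> 'v::ab_group_add \<Rightarrow> 'v"
  assumes "cayley_algebra scl mul one nrm"
  obtains B where "finite_dimensional_vector_space scl B"
proof -
  interpret vector_space scl
    using assms by (simp add: cayley_algebra_def)
  obtain B where "independent B" "UNIV \<subseteq> span B" "card B = dim (UNIV :: 'v set)"
    by (rule basis_exists) blast
  moreover have "finite B"
    using assms \<open>card B = _\<close> by (intro card_ge_0_finite) (simp add: cayley_algebra_def)
  ultimately show thesis
    by (intro that) (unfold_locales, auto)
qed

theorem lemma4p1:
  fixes scl :: "'f::field \<Rightarrow> 'v::ab_group_add \<Rightarrow> 'v"
    and mul :: "'v \<Rightarrow> 'v \<Rightarrow> 'v" and one :: 'v and nrm :: "'v \<Rightarrow> 'f"
    and \<Delta> :: "'v \<Rightarrow> 'v"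
  assumes "cayley_algebra scl mul one nrm"
    and "two_local_automorphism scl mul \<Delta>"
  shows "Vector_Spaces.linear scl scl \<Delta>"
proof -
  interpret composition_algebra scl mul one nrm
    using assms(1) by (rule cayley_algebra_composition_algebra)
  obtain B where "finite_dimensional_vector_space scl B"
    using assms(1) by (rule cayley_algebra_finite_dimensional)
  then show ?thesis
    using polar.form_preserving_linear two_local_automorphism_polar[OF assms(2)] by blast
qed

end
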